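(* Let $n\ge 2$ and $r\ge 1$, and let $d\ge 1$ be the integer with $\binom{n+d-2}{d-1}<r\le\binom{n+d-1}{d}$. Let $L_r^n\subset\mathbb{A}^n$ be the union of $r$ lines through the origin whose corresponding points in $\mathbb{P}^{n-1}$ are in uniform position. Then \[\delta(L_r^n)=dr-\binom{n+d-1}{d-1}.\]
   Context: The ground field $\k$ is algebraically closed of characteristic $0$. For a reduced curve singularity $(C,0)$ with local ring $\mathcal{O}$ and normalisation $\overline{\mathcal{O}}$, $\delta=\dim_\k\overline{\mathcal{O}}/\mathcal{O}$. A set $\Gamma$ of $r$ points in $\mathbb{P}^{n-1}$ is in general position if for every $\ell\ge1$ it imposes $\min(r,\binom{n+\ell-1}{\ell})$ independent conditions on forms of degree $\ell$; it is in uniform position if every subset of $\Gamma$ is in general position. A union of lines through the origin in $\mathbb{A}^n$ is called in general/uniform position if the corresponding point set in $\mathbb{P}^{n-1}$ is. $L_r^n$ denotes the cone over such an $r$-point set, i.e. the union of the $r$ corresponding lines through $0\in\mathbb{A}^n$. *)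

theory Defs
  imports "HOL-Library.Poly_Mapping" "HOL-Computational_Algebra.Polynomial"
    "HOL-Library.Extended_Nat" "HOL-Library.Function_Algebras"
begin

text \<open>Multivariate polynomials over 'a in the variables x_0, x_1, ... :
  finitely supported maps from monomials (exponent vectors) to coefficients.\<close>
type_synonym 'a mpoly = "(nat \<Rightarrow>\<^sub>0 nat) \<Rightarrow>\<^sub>0 'a"

definition mpoly_in_vars :: "nat \<Rightarrow> 'a::zero mpoly \<Rightarrow> bool" where
  "mpoly_in_vars n p \<longleftrightarrow> (\<forall>m\<in>Poly_Mapping.keys p. Poly_Mapping.keys m \<subseteq> {..<n})"

definition mdeg :: "(nat \<Rightarrow>\<^sub>0 nat) \<Rightarrow> nat" where
  "mdeg m = (\<Sum>i\<in>Poly_Mapping.keys m. Poly_Mapping.lookup m i)"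

definition homogeneous :: "nat \<Rightarrow> 'a::zero mpoly \<Rightarrow> bool" where
  "homogeneous l p \<longleftrightarrow> (\<forall>m\<in>Poly_Mapping.keys p. mdeg m = l)"

definition mpeval :: "'a::comm_semiring_1 mpoly \<Rightarrow> (nat \<Rightarrow> 'a) \<Rightarrow> 'a" where
  "mpeval p x = (\<Sum>m\<in>Poly_Mapping.keys p. Poly_Mapping.lookup p m * (\<Prod>i\<in>Poly_Mapping.keys m. x i ^ Poly_Mapping.lookup m i))"

text \<open>restriction of p to the line through v: the univariate polynomial t \<mapsto> p(t v)\<close>
definition mpeval_line :: "'a::comm_semiring_1 mpoly \<Rightarrow> (nat \<Rightarrow> 'a) \<Rightarrow> 'a poly" where
  "mpeval_line p v =
     (\<Sum>m\<in>Poly_Mapping.keys p. monom (Poly_Mapping.lookup p m * (\<Prod>i\<in>Poly_Mapping.keys m. v i ^ Poly_Mapping.lookup m i)) (mdeg m))"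

text \<open>v 0, ..., v (r-1) are homogeneous coordinate vectors (in k^n, coordinates
  j < n) of r distinct points of P^(n-1).\<close>
definition distinct_proj_points :: "nat \<Rightarrow> nat \<Rightarrow> (nat \<Rightarrow> nat \<Rightarrow> 'a::field) \<Rightarrow> bool" where
  "distinct_proj_points n r v \<longleftrightarrow>
     (\<forall>i<r. v i \<noteq> (\<lambda>_. 0) \<and> (\<forall>j\<ge>n. v i j = 0)) \<and>
     (\<forall>i<r. \<forall>j<r. i \<noteq> j \<longrightarrow> \<not> (\<exists>c. v i = (\<lambda>k. c * v j k)))"

definition eval_vectors :: "nat \<Rightarrow> (nat \<Rightarrow> nat \<Rightarrow> 'a::field) \<Rightarrow> nat set \<Rightarrow> nat \<Rightarrow> (nat \<Rightarrow> 'a) set" where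
  "eval_vectors n v J l =
     {(\<lambda>i. if i \<in> J then mpeval p (v i) else 0) | p. mpoly_in_vars n p \<and> homogeneous l p}"

definition conditions_imposed :: "nat \<Rightarrow> (nat \<Rightarrow> nat \<Rightarrow> 'a::field) \<Rightarrow> nat set \<Rightarrow> nat \<Rightarrow> nat" where
  "conditions_imposed n v J l =
     vector_space.dim (\<lambda>(c::'a) (f::nat \<Rightarrow> 'a) i. c * f i) (eval_vectors n v J l)"

definition general_position :: "nat \<Rightarrow> (nat \<Rightarrow> nat \<Rightarrow> 'a::field) \<Rightarrow> nat set \<Rightarrow> bool" where
  "general_position n v J \<longleftrightarrow>
     (\<forall>l\<ge>1. conditions_imposed n v J l = min (card J) ((n + l - 1) choose l))"

definition uniform_position :: "nat \<Rightarrow> nat \<Rightarrow> (nat \<Rightarrow> nat \<Rightarrow> 'a::field) \<Rightarrow> bool" where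
  "uniform_position n r v \<longleftrightarrow> (\<forall>J\<subseteq>{..<r}. general_position n v J)"

text \<open>Normalisation of the union of the r lines: product of r copies of k[t]
  (one parametrisation t \<mapsto> t v_i per line).\<close>
definition normalisation_ring :: "nat \<Rightarrow> (nat \<Rightarrow> 'a::zero poly) set" where
  "normalisation_ring r = {f. \<forall>i\<ge>r. f i = 0}"

text \<open>Coordinate ring of the union of lines, embedded in its normalisation
  via p \<mapsto> (p(t v_i))_i.\<close>
definition curve_ring :: "nat \<Rightarrow> nat \<Rightarrow> (nat \<Rightarrow> nat \<Rightarrow> 'a::field) \<Rightarrow> (nat \<Rightarrow> 'a poly) set" where
  "curve_ring n r v =
     {(\<lambda>i. if i < r then mpeval_line p (v i) else 0) | p. mpoly_in_vars n p}"

definition quotient_dim :: "(nat \<Rightarrow> 'a::field poly) set \<Rightarrow> (nat \<Rightarrow> 'a poly) set \<Rightarrow> enat" where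
  "quotient_dim N W = Sup {enat (card S) | S. finite S \<and> S \<subseteq> N \<and>
      (\<forall>c::(nat \<Rightarrow> 'a poly) \<Rightarrow> 'a.
         (\<lambda>i. \<Sum>s\<in>S. smult (c s) (s i)) \<in> W \<longrightarrow> (\<forall>s\<in>S. c s = 0))}"

definition delta_lines :: "nat \<Rightarrow> nat \<Rightarrow> (nat \<Rightarrow> nat \<Rightarrow> 'a::field) \<Rightarrow> enat" where
  "delta_lines n r v = quotient_dim (normalisation_ring r) (curve_ring n r v)"

end

theory Submission
  imports Defs
begin

text \<open>The coordinate ring W of the union of lines sits inside its normalisation
  N = k[t]^r and is graded by degree: its degree-l piece is the space of values at the r
  points of the forms of degree l, of dimension H(l) = min(r, (n+l-1 choose l)) by general
  position. Lifting, degree by degree, a complement of each piece in k^r gives a basis of N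
  modulo W, so \<delta> = \<Sum>l. r - H(l). The summands vanish exactly from l = d on, and the
  hockey-stick identity evaluates the remaining sum to d r - (n+d-1 choose d-1).\<close>

lemma sum_apply: "(\<Sum>x\<in>A. f x) i = (\<Sum>x\<in>A. f x i)"
  by (induction A rule: infinite_finite_induct) auto

lemma sum_fun_eq: "(\<Sum>x\<in>A. f x) = (\<lambda>i. \<Sum>x\<in>A. f x i)"
  by (simp add: fun_eq_iff sum_apply)

section \<open>Linear independence modulo a subspace\<close>

definition independent_mod ::
    "('a::field \<Rightarrow> 'b::ab_group_add \<Rightarrow> 'b) \<Rightarrow> 'b set \<Rightarrow> 'b set \<Rightarrow> bool" where
  "independent_mod scale W S \<longleftrightarrow> (\<forall>c. (\<Sum>s\<in>S. scale (c s) s) \<in> W \<longrightarrow> (\<forall>s\<in>S. c s = 0))"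

context vector_space
begin

lemma sum_scale_indicator_diff:
  assumes "finite S" "s \<in> S" "t \<in> S" "s \<noteq> t"
  shows "(\<Sum>x\<in>S. (if x = s then 1 else if x = t then -1 else 0) *s h x) = h s - h t"
proof -
  have "(\<Sum>x\<in>S. (if x = s then 1 else if x = t then -1 else 0) *s h x)
      = (\<Sum>x\<in>S. (if x = s then h x else 0) - (if x = t then h x else 0))"
    by (rule sum.cong) (use assms in auto)
  also have "\<dots> = h s - h t"
    using assms by (simp add: sum_subtractf)
  finally show ?thesis .
qed

lemma independent_mod_notin:
  assumes indep: "independent_mod scale W S" and S: "finite S" "s \<in> S"
  shows "s \<notin> W"
proof
  assume "s \<in> W"
  let ?c = "\<lambda>x. if x = s then 1 else 0"
  have "(\<Sum>x\<in>S. ?c x *s x) = (\<Sum>x\<in>S. if x = s then x else 0)"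
    by (rule sum.cong) simp_all
  also have "\<dots> = s"
    using S by simp
  finally have "(\<Sum>x\<in>S. ?c x *s x) \<in> W"
    using \<open>s \<in> W\<close> by simp
  with indep[unfolded independent_mod_def, rule_format, of ?c s] S(2) show False
    by simp
qed

lemma independent_mod_congruent_image:
  assumes W: "subspace W" and S: "finite S" "independent_mod scale W S"
    and shift: "\<And>s. s \<in> S \<Longrightarrow> s - g s \<in> W"
  shows "inj_on g S" "independent (g ` S)"
proof -
  have family: "\<forall>s\<in>S. c s = 0" if "(\<Sum>s\<in>S. c s *s g s) = 0" for c
  proof -
    have "(\<Sum>s\<in>S. c s *s s) - (\<Sum>s\<in>S. c s *s g s) \<in> W"
      unfolding sum_subtractf[symmetric] scale_right_diff_distrib[symmetric]
      using shift by (intro subspace_sum[OF W] subspace_scale[OF W])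
    with that S(2) show ?thesis
      unfolding independent_mod_def by simp
  qed
  show inj: "inj_on g S"
  proof (rule inj_onI, rule ccontr)
    fix s t assume st: "s \<in> S" "t \<in> S" "g s = g t" "s \<noteq> t"
    let ?c = "\<lambda>x. if x = s then 1 else if x = t then -1 else 0"
    have "(\<Sum>x\<in>S. ?c x *s g x) = 0"
      using sum_scale_indicator_diff[OF S(1) st(1,2,4)] st(3) by simp
    with family st show False by force
  qed
  show "independent (g ` S)"
  proof
    assume "dependent (g ` S)"
    then obtain u y where u: "(\<Sum>y\<in>g ` S. u y *s y) = 0" "y \<in> g ` S" "u y \<noteq> 0"
      unfolding dependent_finite[OF finite_imageI[OF S(1)]] by blast
    have "(\<Sum>s\<in>S. u (g s) *s g s) = 0"
      using u(1) by (simp add: sum.reindex[OF inj])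
    with family[of "\<lambda>s. u (g s)"] u(2,3) show False by auto
  qed
qed

lemma independent_mod_card_le:
  assumes W: "subspace W" and B: "finite B" and S: "finite S" "independent_mod scale W S"
    and span: "S \<subseteq> span (W \<union> B)"
  shows "card S \<le> card B"
proof -
  have "\<exists>b\<in>span B. s - b \<in> W" if "s \<in> S" for s
  proof -
    from that span obtain w b where "s = w + b" "w \<in> W" "b \<in> span B"
      unfolding span_Un span_eq_iff[THEN iffD2, OF W] by blast
    then show ?thesis by (metis add_diff_cancel_right')
  qed
  then obtain g where g: "\<And>s. s \<in> S \<Longrightarrow> g s \<in> span B \<and> s - g s \<in> W"
    by metis
  have "card S = card (g ` S)"
    using independent_mod_congruent_image(1)[OF W S] g by (simp add: card_image)
  also have "\<dots> \<le> card B"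
    using independent_span_bound[OF B independent_mod_congruent_image(2)[OF W S]] g by blast
  finally show ?thesis .
qed

lemma complement_exists:
  assumes "E \<subseteq> U" "U \<subseteq> span F" "finite F"
  obtains C where "C \<subseteq> U" "finite C" "card C = dim U - dim E" "U \<subseteq> span (E \<union> C)"
    "independent_mod scale (span E) C"
proof -
  obtain BE where BE: "BE \<subseteq> E" "independent BE" "E \<subseteq> span BE" "card BE = dim E"
    by (rule basis_exists)
  obtain BU where BU: "BE \<subseteq> BU" "BU \<subseteq> U" "independent BU" "U \<subseteq> span BU"
    using maximal_independent_subset_extend[of BE U] BE assms(1) by blast
  have fin: "finite BU"
    using independent_span_bound[OF assms(3) BU(3)] BU(2) assms(2) by auto
  have "card BU = dim U"
    using basis_card_eq_dim[OF BU(2,4,3)] .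
  show ?thesis
  proof
    show "BU - BE \<subseteq> U" "finite (BU - BE)" using BU(2) fin by auto
    show "card (BU - BE) = dim U - dim E"
      using card_Diff_subset[OF finite_subset[OF BU(1) fin] BU(1)] \<open>card BU = dim U\<close> BE(4)
      by simp
    show "U \<subseteq> span (E \<union> (BU - BE))"
      using BU(4) BE(1) span_mono[of BU "E \<union> (BU - BE)"] by blast
    show "independent_mod scale (span E) (BU - BE)"
      unfolding independent_mod_def
    proof (intro allI impI ballI)
      fix c x assume c: "(\<Sum>b\<in>BU - BE. c b *s b) \<in> span E" and x: "x \<in> BU - BE"
      have finE: "finite BE" using finite_subset[OF BU(1) fin] .
      have "span E = span BE"
        using BE(1,3) span_superset by (auto simp: span_eq)
      then obtain u where u: "(\<Sum>b\<in>BU - BE. c b *s b) = (\<Sum>e\<in>BE. u e *s e)"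
        using c unfolding span_finite[OF finE] by auto
      define w where "w b = (if b \<in> BE then - u b else c b)" for b
      have "(\<Sum>b\<in>BU. w b *s b) = (\<Sum>b\<in>BU - BE. c b *s b) - (\<Sum>e\<in>BE. u e *s e)"
        using sum.subset_diff[OF BU(1) fin, of "\<lambda>b. w b *s b"]
        by (simp add: w_def sum_negf)
      then have "(\<Sum>b\<in>BU. w b *s b) = 0" using u by simp
      then have "w x = 0" using BU(3) fin x unfolding dependent_finite[OF fin] by blast
      then show "c x = 0" using x by (simp add: w_def)
    qed
  qed
qed

end

section \<open>Coordinate vectors of scalars and of polynomials\<close>

abbreviation scale_vec :: "'a::field \<Rightarrow> (nat \<Rightarrow> 'a) \<Rightarrow> nat \<Rightarrow> 'a" where
  "scale_vec \<equiv> \<lambda>c f i. c * f i"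

abbreviation scale_pvec :: "'a::field \<Rightarrow> (nat \<Rightarrow> 'a poly) \<Rightarrow> nat \<Rightarrow> 'a poly" where
  "scale_pvec \<equiv> \<lambda>c f i. smult c (f i)"

interpretation vec: vector_space scale_vec
  by unfold_locales (auto simp: fun_eq_iff algebra_simps)

interpretation pvec: vector_space scale_pvec
  by unfold_locales (auto simp: fun_eq_iff smult_add_right smult_add_left)

definition coord_space :: "nat \<Rightarrow> (nat \<Rightarrow> 'a::zero) set" where
  "coord_space r = {a. \<forall>i\<ge>r. a i = 0}"

lemma normalisation_ring_eq_coord_space: "normalisation_ring r = coord_space r"
  by (simp add: normalisation_ring_def coord_space_def)

definition unit_vec :: "nat \<Rightarrow> nat \<Rightarrow> 'a::{zero,one}" where
  "unit_vec j = (\<lambda>i. if i = j then 1 else 0)"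

lemma inj_unit_vec: "inj (unit_vec :: nat \<Rightarrow> nat \<Rightarrow> 'a::zero_neq_one)"
  by (auto simp: inj_def unit_vec_def fun_eq_iff)

lemma coord_space_subset_span_unit_vec:
  "coord_space r \<subseteq> vec.span (unit_vec ` {..<r} :: (nat \<Rightarrow> 'a::field) set)"
proof
  fix a :: "nat \<Rightarrow> 'a" assume a: "a \<in> coord_space r"
  have "a = (\<Sum>j<r. scale_vec (a j) (unit_vec j))"
    using a by (auto simp: fun_eq_iff sum_apply unit_vec_def coord_space_def not_less
        if_distrib[of "\<lambda>x. _ * x"] cong: if_cong)
  also have "\<dots> \<in> vec.span (unit_vec ` {..<r})"
    by (intro vec.span_sum vec.span_scale vec.span_base) auto
  finally show "a \<in> vec.span (unit_vec ` {..<r})" .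
qed

lemma independent_unit_vec: "vec.independent (unit_vec ` {..<r} :: (nat \<Rightarrow> 'a::field) set)"
  unfolding vec.dependent_finite[OF finite_imageI[OF finite_lessThan]]
proof clarify
  fix u :: "(nat \<Rightarrow> 'a) \<Rightarrow> 'a" and j
  assume sum0: "(\<Sum>w\<in>unit_vec ` {..<r}. scale_vec (u w) w) = 0" and j: "j < r"
    and "u (unit_vec j) \<noteq> 0"
  have "(\<Sum>w\<in>unit_vec ` {..<r}. scale_vec (u w) w) j = (\<Sum>k<r. u (unit_vec k) * unit_vec k j)"
    by (simp add: sum_apply sum.reindex[OF inj_on_subset[OF inj_unit_vec]])
  also have "\<dots> = u (unit_vec j)"
    using j by (simp add: unit_vec_def if_distrib[of "\<lambda>x. _ * x"] cong: if_cong)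
  finally show False
    using sum0 \<open>u (unit_vec j) \<noteq> 0\<close> by simp
qed

lemma dim_coord_space: "vec.dim (coord_space r :: (nat \<Rightarrow> 'a::field) set) = r"
proof -
  have sub: "unit_vec ` {..<r} \<subseteq> (coord_space r :: (nat \<Rightarrow> 'a) set)"
    by (auto simp: coord_space_def unit_vec_def)
  have "vec.dim (coord_space r :: (nat \<Rightarrow> 'a) set) = card (unit_vec ` {..<r} :: (nat \<Rightarrow> 'a) set)"
    by (rule sym,
        rule vec.basis_card_eq_dim[OF sub coord_space_subset_span_unit_vec independent_unit_vec])
  also have "\<dots> = r"
    by (simp add: card_image[OF inj_on_subset[OF inj_unit_vec]])
  finally show ?thesis .
qed

definition coord_complement :: "nat \<Rightarrow> (nat \<Rightarrow> 'a::field) set \<Rightarrow> (nat \<Rightarrow> 'a) set \<Rightarrow> bool" where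
  "coord_complement r E C \<longleftrightarrow> finite C \<and> C \<subseteq> coord_space r
     \<and> coord_space r \<subseteq> vec.span (E \<union> C) \<and> independent_mod scale_vec (vec.span E) C"

lemma coord_complement_exists:
  assumes "E \<subseteq> coord_space r"
  shows "\<exists>C. coord_complement r E C \<and> card C = r - vec.dim E"
proof -
  obtain C where "C \<subseteq> coord_space r" "finite C"
    "card C = vec.dim (coord_space r :: (nat \<Rightarrow> 'a) set) - vec.dim E"
    "coord_space r \<subseteq> vec.span (E \<union> C)" "independent_mod scale_vec (vec.span E) C"
    by (rule vec.complement_exists[OF assms coord_space_subset_span_unit_vec
          finite_imageI[OF finite_lessThan]])
  then show ?thesis
    unfolding coord_complement_def dim_coord_space by blast
qed

lemma quotient_dim_eq_Sup:
  "quotient_dim N W = Sup {enat (card S) | S. finite S \<and> S \<subseteq> N \<and> independent_mod scale_pvec W S}"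
  by (simp add: quotient_dim_def independent_mod_def sum_fun_eq)

lemma quotient_dim_eq_card:
  assumes W: "pvec.subspace W" and B: "finite B" "B \<subseteq> N" "independent_mod scale_pvec W B"
    and N: "N \<subseteq> pvec.span (W \<union> B)"
  shows "quotient_dim N W = card B"
  unfolding quotient_dim_eq_Sup
proof (rule antisym)
  show "Sup {enat (card S) | S. finite S \<and> S \<subseteq> N \<and> independent_mod scale_pvec W S} \<le> card B"
    using pvec.independent_mod_card_le[OF W B(1)] N by (auto intro!: Sup_least)
  show "enat (card B) \<le> Sup {enat (card S) | S. finite S \<and> S \<subseteq> N \<and> independent_mod scale_pvec W S}"
    using B by (auto intro!: Sup_upper)
qed

definition monom_vec :: "nat \<Rightarrow> (nat \<Rightarrow> 'a::zero) \<Rightarrow> nat \<Rightarrow> 'a poly" where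
  "monom_vec l a = (\<lambda>i. monom (a i) l)"

definition coeff_vec :: "nat \<Rightarrow> (nat \<Rightarrow> 'a::zero poly) \<Rightarrow> nat \<Rightarrow> 'a" where
  "coeff_vec l f = (\<lambda>i. coeff (f i) l)"

lemma coeff_vec_monom_vec: "coeff_vec l (monom_vec l' a) = (if l' = l then a else 0)"
  by (simp add: coeff_vec_def monom_vec_def coeff_monom fun_eq_iff)

lemma inj_monom_vec: "inj (monom_vec l)"
proof (rule injI)
  fix a b assume "monom_vec l a = monom_vec l b"
  then have "coeff_vec l (monom_vec l a) = coeff_vec l (monom_vec l b)" by simp
  then show "a = b" by (simp add: coeff_vec_monom_vec)
qed

lemma linear_monom_vec: "Vector_Spaces.linear scale_vec scale_pvec (monom_vec l)"
  by (simp add: Vector_Spaces.linear_iff vec.vector_space_axioms pvec.vector_space_axioms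
      monom_vec_def fun_eq_iff add_monom smult_monom)

lemma linear_coeff_vec: "Vector_Spaces.linear scale_pvec scale_vec (coeff_vec l)"
  by (simp add: Vector_Spaces.linear_iff vec.vector_space_axioms pvec.vector_space_axioms
      coeff_vec_def fun_eq_iff)

interpretation monom_vec: Vector_Spaces.linear scale_vec scale_pvec "monom_vec l" for l
  by (rule linear_monom_vec)

interpretation coeff_vec: Vector_Spaces.linear scale_pvec scale_vec "coeff_vec l" for l
  by (rule linear_coeff_vec)

lemma sum_monom_vec_coeff_vec:
  assumes "\<And>i. degree (f i) \<le> M"
  shows "(\<Sum>l\<le>M. monom_vec l (coeff_vec l f)) = f"
  using assms by (simp add: fun_eq_iff sum_apply monom_vec_def coeff_vec_def poly_as_sum_of_monoms')

lemma coord_space_bounded_degree: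
  assumes "f \<in> coord_space r"
  shows "\<exists>M. \<forall>i. degree (f i) \<le> M"
proof (intro exI allI)
  fix i
  show "degree (f i) \<le> (\<Sum>j<r. degree (f j))"
    using assms by (cases "i < r") (auto simp: coord_space_def intro: member_le_sum)
qed

section \<open>Graded subspaces of k[t]^r\<close>

definition graded_piece :: "(nat \<Rightarrow> 'a::zero poly) set \<Rightarrow> nat \<Rightarrow> (nat \<Rightarrow> 'a) set" where
  "graded_piece W l = coeff_vec l ` W"

locale graded_subspace =
  fixes r :: nat and W :: "(nat \<Rightarrow> 'a::field poly) set"
  assumes subspace: "pvec.subspace W"
    and subset_coord_space: "W \<subseteq> coord_space r"
    and monom_vec_coeff_vec_mem: "\<And>w l. w \<in> W \<Longrightarrow> monom_vec l (coeff_vec l w) \<in> W"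
begin

lemma graded_piece_subset: "graded_piece W l \<subseteq> coord_space r"
  using subset_coord_space by (auto simp: graded_piece_def coeff_vec_def coord_space_def)

lemma monom_vec_graded_piece: "a \<in> graded_piece W l \<Longrightarrow> monom_vec l a \<in> W"
  by (auto simp: graded_piece_def monom_vec_coeff_vec_mem)

context
  fixes C :: "nat \<Rightarrow> (nat \<Rightarrow> 'a) set" and d :: nat
  assumes complement: "\<And>l. coord_complement r (graded_piece W l) (C l)"
    and vanish: "\<And>l. d \<le> l \<Longrightarrow> C l = {}"
begin

lemma
  shows C_finite: "finite (C l)"
    and C_subset: "C l \<subseteq> coord_space r"
    and C_spans: "coord_space r \<subseteq> vec.span (graded_piece W l \<union> C l)"
    and C_independent: "independent_mod scale_vec (vec.span (graded_piece W l)) (C l)"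
  using complement[of l] by (simp_all add: coord_complement_def)

abbreviation lifted_complement :: "(nat \<Rightarrow> 'a poly) set" where
  "lifted_complement \<equiv> \<Union>l<d. monom_vec l ` C l"

lemma finite_lifted_complement: "finite lifted_complement"
  using C_finite by blast

lemma card_lifted_complement: "card lifted_complement = (\<Sum>l<d. card (C l))"
proof -
  have nonzero: "a \<noteq> 0" if "a \<in> C l" for a l
    using vec.independent_mod_notin[OF C_independent C_finite that] vec.span_zero by blast
  have "card lifted_complement = (\<Sum>l<d. card (monom_vec l ` C l))"
  proof (rule card_UN_disjoint)
    show "\<forall>i\<in>{..<d}. \<forall>j\<in>{..<d}. i \<noteq> j \<longrightarrow> monom_vec i ` C i \<inter> monom_vec j ` C j = {}"
    proof (intro ballI impI)
      fix i j :: nat assume "i \<noteq> j"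
      show "monom_vec i ` C i \<inter> monom_vec j ` C j = {}"
      proof (rule ccontr)
        assume "monom_vec i ` C i \<inter> monom_vec j ` C j \<noteq> {}"
        then obtain a b where "a \<in> C i" "b \<in> C j" "monom_vec i a = monom_vec j b" by blast
        then have "coeff_vec i (monom_vec i a) = coeff_vec i (monom_vec j b)" by simp
        then have "a = 0"
          using \<open>i \<noteq> j\<close> by (simp add: coeff_vec_monom_vec)
        with nonzero \<open>a \<in> C i\<close> show False by blast
      qed
    qed
  qed (use C_finite in auto)
  also have "\<dots> = (\<Sum>l<d. card (C l))"
    by (simp add: card_image[OF inj_on_subset[OF inj_monom_vec]])
  finally show ?thesis .
qed

lemma lifted_complement_subset: "lifted_complement \<subseteq> coord_space r"
  using C_subset by (fastforce simp: coord_space_def monom_vec_def)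

lemma independent_mod_lifted_complement: "independent_mod scale_pvec W lifted_complement"
  unfolding independent_mod_def
proof (intro allI impI ballI)
  fix c s
  assume inW: "(\<Sum>s\<in>lifted_complement. scale_pvec (c s) s) \<in> W" and "s \<in> lifted_complement"
  then obtain l b where l: "l < d" and b: "b \<in> C l" and s: "s = monom_vec l b" by blast
  have "coeff_vec l (\<Sum>s\<in>lifted_complement. scale_pvec (c s) s)
      = (\<Sum>s\<in>lifted_complement. scale_vec (c s) (coeff_vec l s))"
    by (simp add: coeff_vec.sum coeff_vec.scale)
  also have "\<dots> = (\<Sum>s\<in>monom_vec l ` C l. scale_vec (c s) (coeff_vec l s))"
  proof (rule sum.mono_neutral_right)
    show "\<forall>s\<in>lifted_complement - monom_vec l ` C l. scale_vec (c s) (coeff_vec l s) = 0"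
      by (auto simp: coeff_vec_monom_vec zero_fun_def)
  qed (use l finite_lifted_complement in auto)
  also have "\<dots> = (\<Sum>b\<in>C l. scale_vec (c (monom_vec l b)) b)"
    by (simp add: sum.reindex[OF inj_on_subset[OF inj_monom_vec]] coeff_vec_monom_vec)
  moreover have "coeff_vec l (\<Sum>s\<in>lifted_complement. scale_pvec (c s) s) \<in> graded_piece W l"
    unfolding graded_piece_def using inW by (rule imageI)
  ultimately have "(\<Sum>b\<in>C l. scale_vec (c (monom_vec l b)) b) \<in> vec.span (graded_piece W l)"
    by (simp add: vec.span_base)
  then show "c s = 0"
    using C_independent[of l, unfolded independent_mod_def, rule_format, OF _ b] s by simp
qed

lemma coord_space_subset_span_lifted_complement:
  "coord_space r \<subseteq> pvec.span (W \<union> lifted_complement)"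
proof
  fix f :: "nat \<Rightarrow> 'a poly" assume f: "f \<in> coord_space r"
  obtain M where "\<And>i. degree (f i) \<le> M"
    using coord_space_bounded_degree[OF f] by blast
  then have "f = (\<Sum>l\<le>M. monom_vec l (coeff_vec l f))"
    by (rule sum_monom_vec_coeff_vec[symmetric])
  also have "\<dots> \<in> pvec.span (W \<union> lifted_complement)"
  proof (rule pvec.span_sum)
    fix l
    have "coeff_vec l f \<in> coord_space r"
      using f by (simp add: coord_space_def coeff_vec_def)
    then have "coeff_vec l f \<in> vec.span (graded_piece W l \<union> C l)"
      using C_spans by blast
    then have "monom_vec l (coeff_vec l f) \<in> pvec.span (monom_vec l ` (graded_piece W l \<union> C l))"
      by (simp add: monom_vec.span_image)
    moreover have "monom_vec l ` (graded_piece W l \<union> C l) \<subseteq> W \<union> lifted_complement"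
      using monom_vec_graded_piece vanish[of l] by (cases "l < d") auto
    ultimately show "monom_vec l (coeff_vec l f) \<in> pvec.span (W \<union> lifted_complement)"
      using pvec.span_mono by blast
  qed
  finally show "f \<in> pvec.span (W \<union> lifted_complement)" .
qed

end

theorem quotient_dim_eq_sum:
  assumes saturated: "\<And>l. d \<le> l \<Longrightarrow> vec.dim (graded_piece W l) = r"
  shows "quotient_dim (coord_space r) W = (\<Sum>l<d. r - vec.dim (graded_piece W l))"
proof -
  have "\<forall>l. \<exists>C. coord_complement r (graded_piece W l) C \<and> card C = r - vec.dim (graded_piece W l)"
    using coord_complement_exists[OF graded_piece_subset] by blast
  then obtain C where C: "\<forall>l. coord_complement r (graded_piece W l) (C l)
      \<and> card (C l) = r - vec.dim (graded_piece W l)"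
    by (rule choice[THEN exE])
  have vanish: "C l = {}" if "d \<le> l" for l
  proof -
    have "finite (C l)" "card (C l) = 0"
      using C saturated[OF that] by (auto simp: coord_complement_def)
    then show ?thesis by simp
  qed
  have "quotient_dim (coord_space r) W = card (\<Union>l<d. monom_vec l ` C l)"
    using C vanish by (intro quotient_dim_eq_card subspace finite_lifted_complement
        lifted_complement_subset independent_mod_lifted_complement
        coord_space_subset_span_lifted_complement) blast+
  also have "\<dots> = (\<Sum>l<d. r - vec.dim (graded_piece W l))"
    using card_lifted_complement[of C d] C vanish by simp
  finally show ?thesis .
qed

end

section \<open>The coordinate ring of a union of lines\<close>

lemma smult_sum_right: "smult c (\<Sum>x\<in>A. f x) = (\<Sum>x\<in>A. smult c (f x))"
  by (induction A rule: infinite_finite_induct) (simp_all add: smult_add_right)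

definition eval_monomial :: "(nat \<Rightarrow>\<^sub>0 nat) \<Rightarrow> (nat \<Rightarrow> 'a::comm_semiring_1) \<Rightarrow> 'a" where
  "eval_monomial m x = (\<Prod>i\<in>Poly_Mapping.keys m. x i ^ Poly_Mapping.lookup m i)"

lemma mpeval_eq_sum:
  assumes "finite A" "Poly_Mapping.keys p \<subseteq> A"
  shows "mpeval p x = (\<Sum>m\<in>A. Poly_Mapping.lookup p m * eval_monomial m x)"
  unfolding mpeval_def eval_monomial_def
  by (rule sum.mono_neutral_left) (use assms in \<open>auto simp: in_keys_iff\<close>)

lemma mpeval_line_eq_sum:
  assumes "finite A" "Poly_Mapping.keys p \<subseteq> A"
  shows "mpeval_line p x = (\<Sum>m\<in>A. monom (Poly_Mapping.lookup p m * eval_monomial m x) (mdeg m))"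
  unfolding mpeval_line_def eval_monomial_def
  by (rule sum.mono_neutral_left) (use assms in \<open>auto simp: in_keys_iff\<close>)

lemma mpeval_line_add: "mpeval_line (p + q) x = mpeval_line p x + mpeval_line q x"
proof -
  have A: "finite (Poly_Mapping.keys p \<union> Poly_Mapping.keys q)" by simp
  show ?thesis
    by (simp add: mpeval_line_eq_sum[OF A keys_add] mpeval_line_eq_sum[OF A, of p]
        mpeval_line_eq_sum[OF A, of q] lookup_add distrib_right add_monom[symmetric] sum.distrib)
qed

lemma mpeval_line_scale:
  "mpeval_line (Poly_Mapping.map ((*) c) p) x = smult c (mpeval_line p x)"
proof -
  have keys: "Poly_Mapping.keys (Poly_Mapping.map ((*) c) p) \<subseteq> Poly_Mapping.keys p"
    by (auto simp: in_keys_iff map.rep_eq when_def)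
  have "mpeval_line (Poly_Mapping.map ((*) c) p) x
      = (\<Sum>m\<in>Poly_Mapping.keys p.
          monom (Poly_Mapping.lookup (Poly_Mapping.map ((*) c) p) m * eval_monomial m x) (mdeg m))"
    by (rule mpeval_line_eq_sum[OF finite_keys keys])
  also have "\<dots> = (\<Sum>m\<in>Poly_Mapping.keys p.
      smult c (monom (Poly_Mapping.lookup p m * eval_monomial m x) (mdeg m)))"
    by (rule sum.cong) (auto simp: map.rep_eq when_def smult_monom mult.assoc)
  also have "\<dots> = smult c (mpeval_line p x)"
    by (simp add: mpeval_line_eq_sum[OF finite_keys order_refl, where p = p] smult_sum_right)
  finally show ?thesis .
qed

lemma mpoly_in_vars_add: "mpoly_in_vars n p \<Longrightarrow> mpoly_in_vars n q \<Longrightarrow> mpoly_in_vars n (p + q)"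
  using keys_add[of p q] by (auto simp: mpoly_in_vars_def)

lemma mpoly_in_vars_scale: "mpoly_in_vars n p \<Longrightarrow> mpoly_in_vars n (Poly_Mapping.map ((*) c) p)"
  by (auto simp: mpoly_in_vars_def in_keys_iff map.rep_eq when_def)

definition homogeneous_component :: "nat \<Rightarrow> 'a::zero mpoly \<Rightarrow> 'a mpoly" where
  "homogeneous_component l p = Poly_Mapping.mapp (\<lambda>m a. if mdeg m = l then a else 0) p"

lemma lookup_homogeneous_component:
  "Poly_Mapping.lookup (homogeneous_component l p) m
     = (if mdeg m = l then Poly_Mapping.lookup p m else 0)"
  by (simp add: homogeneous_component_def lookup_mapp when_def in_keys_iff)

lemma keys_homogeneous_component:
  "Poly_Mapping.keys (homogeneous_component l p) = {m \<in> Poly_Mapping.keys p. mdeg m = l}"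
  by (auto simp: in_keys_iff lookup_homogeneous_component split: if_splits)

lemma homogeneous_homogeneous_component: "homogeneous l (homogeneous_component l p)"
  by (simp add: homogeneous_def keys_homogeneous_component)

lemma mpoly_in_vars_homogeneous_component:
  "mpoly_in_vars n p \<Longrightarrow> mpoly_in_vars n (homogeneous_component l p)"
  by (auto simp: mpoly_in_vars_def keys_homogeneous_component)

lemma coeff_mpeval_line: "coeff (mpeval_line p x) l = mpeval (homogeneous_component l p) x"
  by (simp add: mpeval_line_eq_sum[OF finite_keys order_refl] coeff_sum coeff_monom
      mpeval_eq_sum[of "Poly_Mapping.keys p" "homogeneous_component l p"]
      keys_homogeneous_component lookup_homogeneous_component if_distrib[of "\<lambda>a. a * _"]
      cong: if_cong)

lemma mpeval_line_homogeneous: "homogeneous l p \<Longrightarrow> mpeval_line p x = monom (mpeval p x) l"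
  unfolding mpeval_line_def mpeval_def homogeneous_def
  by (simp add: monom_sum)

lemma mpeval_homogeneous_degree_0:
  assumes "homogeneous 0 p"
  shows "mpeval p x = Poly_Mapping.lookup p 0"
proof -
  have "mdeg m = 0 \<Longrightarrow> m = 0" for m
    by (auto simp: mdeg_def in_keys_iff poly_mapping_eq_iff fun_eq_iff)
  then have "Poly_Mapping.keys p \<subseteq> {0}"
    using assms by (auto simp: homogeneous_def)
  then show ?thesis
    by (simp add: mpeval_eq_sum[of "{0}" p] eval_monomial_def)
qed

lemma curve_ring_subspace: "pvec.subspace (curve_ring n r v)"
  unfolding pvec.subspace_def curve_ring_def
proof (intro conjI ballI allI)
  show "0 \<in> {\<lambda>i. if i < r then mpeval_line p (v i) else 0 | p. mpoly_in_vars n p}"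
    by (intro CollectI exI[of _ 0]) (auto simp: mpoly_in_vars_def mpeval_line_def fun_eq_iff)
next
  fix f g
  assume "f \<in> {\<lambda>i. if i < r then mpeval_line p (v i) else 0 | p. mpoly_in_vars n p}"
    and "g \<in> {\<lambda>i. if i < r then mpeval_line p (v i) else 0 | p. mpoly_in_vars n p}"
  then obtain p q where "mpoly_in_vars n p" "mpoly_in_vars n q"
    "f = (\<lambda>i. if i < r then mpeval_line p (v i) else 0)"
    "g = (\<lambda>i. if i < r then mpeval_line q (v i) else 0)"
    by blast
  then show "f + g \<in> {\<lambda>i. if i < r then mpeval_line p (v i) else 0 | p. mpoly_in_vars n p}"
    by (intro CollectI exI[of _ "p + q"]) (auto simp: mpoly_in_vars_add mpeval_line_add fun_eq_iff)
next
  fix c f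
  assume "f \<in> {\<lambda>i. if i < r then mpeval_line p (v i) else 0 | p. mpoly_in_vars n p}"
  then obtain p where "mpoly_in_vars n p" "f = (\<lambda>i. if i < r then mpeval_line p (v i) else 0)"
    by blast
  then show "scale_pvec c f \<in> {\<lambda>i. if i < r then mpeval_line p (v i) else 0 | p. mpoly_in_vars n p}"
    by (intro CollectI exI[of _ "Poly_Mapping.map ((*) c) p"])
      (auto simp: mpoly_in_vars_scale mpeval_line_scale fun_eq_iff)
qed

lemma coeff_vec_curve_ring:
  assumes "mpoly_in_vars n p"
  shows "coeff_vec l (\<lambda>i. if i < r then mpeval_line p (v i) else 0)
       = (\<lambda>i. if i \<in> {..<r} then mpeval (homogeneous_component l p) (v i) else 0)"
  by (simp add: coeff_vec_def coeff_mpeval_line fun_eq_iff)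

lemma graded_subspace_curve_ring: "graded_subspace r (curve_ring n r v)"
proof
  show "pvec.subspace (curve_ring n r v)"
    by (rule curve_ring_subspace)
  show "curve_ring n r v \<subseteq> coord_space r"
    by (auto simp: curve_ring_def coord_space_def)
  fix w l assume "w \<in> curve_ring n r v"
  then obtain p where p: "mpoly_in_vars n p" "w = (\<lambda>i. if i < r then mpeval_line p (v i) else 0)"
    unfolding curve_ring_def by blast
  have "monom_vec l (coeff_vec l w)
      = (\<lambda>i. if i < r then mpeval_line (homogeneous_component l p) (v i) else 0)"
    using p(1) unfolding p(2)
    by (simp add: coeff_vec_curve_ring monom_vec_def fun_eq_iff
        mpeval_line_homogeneous[OF homogeneous_homogeneous_component])
  then show "monom_vec l (coeff_vec l w) \<in> curve_ring n r v"
    using mpoly_in_vars_homogeneous_component[OF p(1)] unfolding curve_ring_def by blast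
qed

lemma graded_piece_curve_ring:
  "graded_piece (curve_ring n r v) l = eval_vectors n v {..<r} l"
proof
  show "graded_piece (curve_ring n r v) l \<subseteq> eval_vectors n v {..<r} l"
    unfolding graded_piece_def curve_ring_def eval_vectors_def
    using coeff_vec_curve_ring mpoly_in_vars_homogeneous_component homogeneous_homogeneous_component
    by blast
  show "eval_vectors n v {..<r} l \<subseteq> graded_piece (curve_ring n r v) l"
  proof
    fix a assume "a \<in> eval_vectors n v {..<r} l"
    then obtain p where p: "mpoly_in_vars n p" "homogeneous l p"
      "a = (\<lambda>i. if i \<in> {..<r} then mpeval p (v i) else 0)"
      unfolding eval_vectors_def by blast
    have "a = coeff_vec l (\<lambda>i. if i < r then mpeval_line p (v i) else 0)"
      using p by (simp add: coeff_vec_def mpeval_line_homogeneous fun_eq_iff)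
    then show "a \<in> graded_piece (curve_ring n r v) l"
      using p(1) unfolding graded_piece_def curve_ring_def by blast
  qed
qed

lemma dim_eval_vectors_degree_0:
  assumes "1 \<le> r"
  shows "vec.dim (eval_vectors n v {..<r} 0 :: (nat \<Rightarrow> 'a::field) set) = 1"
proof -
  define one :: "nat \<Rightarrow> 'a" where "one = (\<lambda>i. if i \<in> {..<r} then 1 else 0)"
  have "one \<in> eval_vectors n v {..<r} 0"
  proof -
    have "homogeneous 0 (1::'a mpoly)" "mpoly_in_vars n (1::'a mpoly)"
      by (auto simp: homogeneous_def mdeg_def mpoly_in_vars_def)
    moreover have "one = (\<lambda>i. if i \<in> {..<r} then mpeval (1::'a mpoly) (v i) else 0)"
      by (auto simp: one_def mpeval_def fun_eq_iff)
    ultimately show ?thesis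
      unfolding eval_vectors_def by blast
  qed
  moreover have "eval_vectors n v {..<r} 0 \<subseteq> vec.span {one}"
  proof
    fix a assume "a \<in> eval_vectors n v {..<r} 0"
    then obtain p where "homogeneous 0 p" "a = (\<lambda>i. if i \<in> {..<r} then mpeval p (v i) else 0)"
      unfolding eval_vectors_def by blast
    then have "a = scale_vec (Poly_Mapping.lookup p 0) one"
      by (auto simp: one_def fun_eq_iff mpeval_homogeneous_degree_0)
    then show "a \<in> vec.span {one}"
      by (simp add: vec.span_base vec.span_scale)
  qed
  moreover have "one \<noteq> 0"
    using assms by (auto simp: one_def fun_eq_iff intro!: exI[of _ 0])
  ultimately have "card {one} = vec.dim (eval_vectors n v {..<r} 0)"
    by (intro vec.basis_card_eq_dim) auto
  then show ?thesis by simp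
qed

section \<open>The delta invariant\<close>

lemma binomial_diagonal_mono:
  assumes "1 \<le> n" "l \<le> l'"
  shows "(n + l - 1) choose l \<le> (n + l' - 1) choose l'"
proof -
  have sym: "(n + k - 1) choose k = (n - 1 + k) choose (n - 1)" for k
    using assms(1) binomial_symmetric[of k "n - 1 + k"] by (simp add: add.commute)
  show ?thesis
    unfolding sym using assms(2) by (simp add: binomial_right_mono)
qed

lemma sum_binomial_diagonal:
  assumes "1 \<le> n" "1 \<le> d"
  shows "(\<Sum>l<d. (n + l - 1) choose l) = (n + d - 1) choose (d - 1)"
proof -
  have "{..<d} = {..d - 1}" using assms(2) by auto
  then have "(\<Sum>l<d. (n + l - 1) choose l) = (\<Sum>l\<le>d - 1. (n - 1 + l) choose l)"
    using assms(1) by (intro sum.cong) auto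
  also have "\<dots> = Suc (n - 1 + (d - 1)) choose (d - 1)"
    by (rule sum_choose_lower)
  also have "Suc (n - 1 + (d - 1)) = n + d - 1"
    using assms by arith
  finally show ?thesis .
qed

lemma sum_deficiency_binomial:
  assumes "1 \<le> n" "1 \<le> d" "(n + d - 2) choose (d - 1) < r"
  shows "int (\<Sum>l<d. r - min r ((n + l - 1) choose l))
       = int d * int r - int ((n + d - 1) choose (d - 1))"
proof -
  have small: "(n + l - 1) choose l < r" if "l < d" for l
  proof -
    have "(n + l - 1) choose l \<le> (n + (d - 1) - 1) choose (d - 1)"
      using that by (intro binomial_diagonal_mono[OF assms(1)]) simp
    also have "n + (d - 1) - 1 = n + d - 2"
      using assms(2) by simp
    finally show ?thesis
      using assms(3) by simp
  qed
  have "int (\<Sum>l<d. r - min r ((n + l - 1) choose l)) = (\<Sum>l<d. int r - int ((n + l - 1) choose l))"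
    using small by (simp add: of_nat_diff less_imp_le)
  also have "\<dots> = int d * int r - int (\<Sum>l<d. (n + l - 1) choose l)"
    by (simp add: sum_subtractf)
  also have "\<dots> = int d * int r - int ((n + d - 1) choose (d - 1))"
    by (simp only: sum_binomial_diagonal[OF assms(1,2)])
  finally show ?thesis .
qed

lemma delta_lines_eq_sum:
  assumes "1 \<le> r" "general_position n v {..<r}"
    and saturated: "\<And>l. d \<le> l \<Longrightarrow> r \<le> (n + l - 1) choose l"
  shows "delta_lines n r v = (\<Sum>l<d. r - min r ((n + l - 1) choose l))"
proof -
  interpret graded_subspace r "curve_ring n r v"
    by (rule graded_subspace_curve_ring)
  have dim: "vec.dim (graded_piece (curve_ring n r v) l) = min r ((n + l - 1) choose l)" for l
    using assms(1,2) dim_eval_vectors_degree_0[OF assms(1), of n v]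
    by (cases "l = 0")
      (simp_all add: graded_piece_curve_ring general_position_def conditions_imposed_def)
  show ?thesis
    unfolding delta_lines_def normalisation_ring_eq_coord_space
    using quotient_dim_eq_sum[of d] saturated by (simp add: dim)
qed

theorem mainTheorem1:
  fixes n r d :: nat and v :: "nat \<Rightarrow> nat \<Rightarrow> 'a::field_char_0"
  assumes alg_closed: "\<forall>p::'a poly. degree p \<noteq> 0 \<longrightarrow> (\<exists>x. poly p x = 0)"
    and "n \<ge> 2" and "r \<ge> 1" and "d \<ge> 1"
    and "(n + d - 2) choose (d - 1) < r" and "r \<le> (n + d - 1) choose d"
    and "distinct_proj_points n r v"
    and "uniform_position n r v"
  shows "\<exists>k. delta_lines n r v = enat k \<and>
           int k = int d * int r - int ((n + d - 1) choose (d - 1))"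
proof -
  \<comment> \<open>Only general position of the whole point set enters.\<close>
  have n: "1 \<le> n" using \<open>n \<ge> 2\<close> by simp
  have general: "general_position n v {..<r}"
    using \<open>uniform_position n r v\<close> by (simp add: uniform_position_def)
  have saturated: "r \<le> (n + l - 1) choose l" if "d \<le> l" for l
    using binomial_diagonal_mono[OF n that] \<open>r \<le> (n + d - 1) choose d\<close> by simp
  have "delta_lines n r v = (\<Sum>l<d. r - min r ((n + l - 1) choose l))"
    using delta_lines_eq_sum[OF \<open>r \<ge> 1\<close> general saturated] .
  then show ?thesis
    using sum_deficiency_binomial[OF n \<open>d \<ge> 1\<close> \<open>(n + d - 2) choose (d - 1) < r\<close>] by blast
qed

end
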